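(* Let $r\geq 2$ and let $X$ be a rose with $r$ petals, with $F\cong\pi_1(X,x_0)$ the free group on the generators $\alpha_1,\ldots,\alpha_r$ corresponding to the oriented petals. Let $Z$ be a finite, non-empty, connected graph and let $Z\to X$ be an immersion that is not a covering map. Then the immersion factors as $Z\hookrightarrow Y\to X$, where $Z$ is a subgraph of $Y$, $Y$ is a finite connected graph, $Y\to X$ is a finite-sheeted (combinatorial) covering map, and the image of the resulting homomorphism $F\to\mathrm{Sym}(V(Y))$ (given by the action of $F$ on the vertex set $V(Y)$ of $Y$ by path lifting) is exactly the alternating group $\mathrm{Alt}(V(Y))$.
   Context: A rose with $r$ petals is a graph with exactly one vertex $x_0$ and $r$ edges; each edge is oriented and labelled by a generator $\alpha_i$, giving $\pi_1(X,x_0)\cong F$ free on $\alpha_1,\dots,\alpha_r$. A combinatorial map of graphs $Y\to X$ (sending vertices to vertices and edges to edges) is equivalent to an orientation and labelling of the edges of $Y$ by $\alpha_1,\ldots,\alpha_r$. It is an immersion if it is injective on links of vertices, equivalently if at every vertex of $Y$ and for every label $\alpha_i$ there is at most one incoming and at most one outgoing edge labelled $\alpha_i$; it is a covering map if it is bijective on links of vertices, equivalently if at every vertex there is exactly one incoming and exactly one outgoing edge labelled $\alpha_i$ for each $i$. For a covering $Y\to X$, $F$ acts on the vertices of $Y$ by path lifting: for a vertex $y$ and $\gamma\in F$ viewed as a loop at $x_0$, $\gamma.y$ is the endpoint of the unique lift of $\gamma$ starting at $y$; concretely, $\alpha_i$ sends $u$ to $v$ when there is an edge labelled $\alpha_i$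 oriented from $u$ to $v$. *)

theory Defs
  imports "HOL-Combinatorics.Permutations"
begin

text \<open>A graph over the rose with r petals: vertex set V and a set E of labelled
oriented edges (u, i, v), meaning an edge labelled alpha_i oriented from u to v
(labels i < r).  Such a labelling is the same as a combinatorial map to the rose.
Parallel edges with the same label and orientation cannot occur in an immersion,
so for immersions/coverings this representation loses nothing.\<close>

definition labelled_graph :: "nat \<Rightarrow> 'v set \<Rightarrow> ('v \<times> nat \<times> 'v) set \<Rightarrow> bool" where
  "labelled_graph r V E \<longleftrightarrow> (\<forall>(u, i, v) \<in> E. u \<in> V \<and> v \<in> V \<and> i < r)"

definition adj :: "('v \<times> nat \<times> 'v) set \<Rightarrow> ('v \<times> 'v) set" where
  "adj E = {(u, v). \<exists>i. (u, i, v) \<in> E \<or> (v, i, u) \<in> E}"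

definition connected_graph :: "'v set \<Rightarrow> ('v \<times> nat \<times> 'v) set \<Rightarrow> bool" where
  "connected_graph V E \<longleftrightarrow> (\<forall>u \<in> V. \<forall>v \<in> V. (u, v) \<in> (adj E)\<^sup>*)"

definition immersion :: "nat \<Rightarrow> 'v set \<Rightarrow> ('v \<times> nat \<times> 'v) set \<Rightarrow> bool" where
  "immersion r V E \<longleftrightarrow> labelled_graph r V E \<and>
     (\<forall>u \<in> V. \<forall>i < r. (\<forall>v w. (u, i, v) \<in> E \<and> (u, i, w) \<in> E \<longrightarrow> v = w) \<and>
                       (\<forall>v w. (v, i, u) \<in> E \<and> (w, i, u) \<in> E \<longrightarrow> v = w))"

definition covering :: "nat \<Rightarrow> 'v set \<Rightarrow> ('v \<times> nat \<times> 'v) set \<Rightarrow> bool" where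
  "covering r V E \<longleftrightarrow> labelled_graph r V E \<and>
     (\<forall>u \<in> V. \<forall>i < r. (\<exists>!v. (u, i, v) \<in> E) \<and> (\<exists>!v. (v, i, u) \<in> E))"

text \<open>Action of the generator alpha_i (and of its inverse) on vertices by path
lifting; extended by the identity outside V.\<close>
definition gen_act :: "'v set \<Rightarrow> ('v \<times> nat \<times> 'v) set \<Rightarrow> nat \<Rightarrow> 'v \<Rightarrow> 'v" where
  "gen_act V E i u = (if u \<in> V then (THE v. (u, i, v) \<in> E) else u)"

definition gen_act_inv :: "'v set \<Rightarrow> ('v \<times> nat \<times> 'v) set \<Rightarrow> nat \<Rightarrow> 'v \<Rightarrow> 'v" where
  "gen_act_inv V E i u = (if u \<in> V then (THE v. (v, i, u) \<in> E) else u)"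

text \<open>Image of F = <alpha_1..alpha_r> in Sym(V): all permutations induced by
words in the generators and their inverses.\<close>
inductive_set monodromy_group :: "nat \<Rightarrow> 'v set \<Rightarrow> ('v \<times> nat \<times> 'v) set \<Rightarrow> ('v \<Rightarrow> 'v) set"
  for r V E where
  mg_id: "id \<in> monodromy_group r V E"
| mg_gen: "p \<in> monodromy_group r V E \<Longrightarrow> i < r \<Longrightarrow> gen_act V E i \<circ> p \<in> monodromy_group r V E"
| mg_inv: "p \<in> monodromy_group r V E \<Longrightarrow> i < r \<Longrightarrow> gen_act_inv V E i \<circ> p \<in> monodromy_group r V E"

definition alt_group :: "'v set \<Rightarrow> ('v \<Rightarrow> 'v) set" where
  "alt_group V = {p. p permutes V \<and> evenperm p}"

end

theory Submission
  imports Defs "HOL-Combinatorics.Cycles"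
begin

(* Let Z -> X be a finite connected immersion that is not a covering, so
   some vertex z0 of Z misses an edge of some label i0.  We build a covering Y containing
   Z whose monodromy group is Alt(V(Y)):
   1. Completion: add one fresh vertex Inr 1 joined to z0 by an i0-edge and extend, for
      every label, the partial bijection given by the edges to a permutation rho i.
   2. Two long cycles: attach two cycles A and B of length P that share exactly
      one vertex c; label i0 rotates A, another label j1 rotates B, and a
      spare transposition makes every generator even.  Choosing P = M + 1, N = M * M for
      a common even period M of rho i0 and rho j1, the N-th powers of the generators
      pi i0 and pi j1 are the bare rotations of A and B.
   3. Group theory: the commutator of the two rotations is a 3-cycle on {c, Inr P, Inr 0};
      a maximal set R with Alt(R) in the monodromy group is invariant under all
      generators, hence equals V(Y) because Y is connected.  Evenness of the generators
      gives the reverse inclusion. *)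

definition perm_group :: "('b \<Rightarrow> 'b) set \<Rightarrow> bool" where
  "perm_group G \<longleftrightarrow> id \<in> G \<and> (\<forall>f\<in>G. \<forall>g\<in>G. f \<circ> g \<in> G) \<and> (\<forall>f\<in>G. inv f \<in> G)"

lemma perm_group_id: "perm_group G \<Longrightarrow> id \<in> G"
  and perm_group_comp: "perm_group G \<Longrightarrow> f \<in> G \<Longrightarrow> g \<in> G \<Longrightarrow> f \<circ> g \<in> G"
  and perm_group_inv: "perm_group G \<Longrightarrow> f \<in> G \<Longrightarrow> inv f \<in> G"
  unfolding perm_group_def by blast+

lemma perm_group_funpow: "perm_group G \<Longrightarrow> f \<in> G \<Longrightarrow> f ^^ n \<in> G"
  by (induction n) (simp_all add: perm_group_id perm_group_comp)

lemma three_cycle_in_alt_group: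
  assumes "u \<in> R" "v \<in> R" "w \<in> R" "u \<noteq> v" "v \<noteq> w"
  shows "cycle_of_list [u, v, w] \<in> alt_group R"
proof -
  have "cycle_of_list [u, v, w] permutes R"
    using cycle_permutes[of "[u, v, w]"] by (rule permutes_subset) (use assms in simp)
  moreover have "evenperm (cycle_of_list [u, v, w])"
    using assms by (simp add: evenperm_comp permutation_swap_id evenperm_swap)
  ultimately show ?thesis unfolding alt_group_def by blast
qed

lemma double_transposition_in_group:
  assumes G: "perm_group G" and pq: "p \<noteq> q" and ab: "a \<noteq> b" "a \<in> R" "b \<in> R"
    and cyc: "\<And>x. x \<in> R \<Longrightarrow> x \<noteq> p \<Longrightarrow> x \<noteq> q \<Longrightarrow> cycle_of_list [p, q, x] \<in> G"
  shows "transpose p q \<circ> transpose a b \<in> G"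
proof -
  let ?c = "\<lambda>x. cycle_of_list [p, q, x]"
  consider "{a, b} = {p, q}" | "a = q" "b \<noteq> p" | "b = q" "a \<noteq> p" | "a = p" "b \<noteq> q"
    | "b = p" "a \<noteq> q" | "a \<notin> {p, q}" "b \<notin> {p, q}" by blast
  then show ?thesis
  proof cases
    case 1
    then have "transpose a b = transpose p q" by (auto simp: doubleton_eq_iff transpose_commute)
    then have "transpose p q \<circ> transpose a b = id" by simp
    then show ?thesis using perm_group_id[OF G] by simp
  next
    case 2
    have "?c b \<in> G" using cyc 2 ab by blast
    moreover have "transpose p q \<circ> transpose a b = ?c b" using 2 by simp
    ultimately show ?thesis by metis
  next
    case 3
    have "?c a \<in> G" using cyc 3 ab by blast
    moreover have "transpose p q \<circ> transpose a b = ?c a" using 3 by (simp add: transpose_commute)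
    ultimately show ?thesis by metis
  next
    case 4
    have "?c b \<in> G" using cyc 4 ab by blast
    then have "?c b \<circ> ?c b \<in> G" by (intro perm_group_comp[OF G])
    moreover have "transpose p q \<circ> transpose a b = ?c b \<circ> ?c b"
      using 4 pq ab by (simp add: fun_eq_iff transpose_def)
    ultimately show ?thesis by metis
  next
    case 5
    have "?c a \<in> G" using cyc 5 ab by blast
    then have "?c a \<circ> ?c a \<in> G" by (intro perm_group_comp[OF G])
    moreover have "transpose p q \<circ> transpose a b = ?c a \<circ> ?c a"
      using 5 pq ab by (simp add: fun_eq_iff transpose_def)
    ultimately show ?thesis by metis
  next
    case 6
    have "?c a \<in> G" "?c b \<in> G" using cyc 6 ab by blast+
    then have "?c a \<circ> ?c b \<circ> ?c b \<circ> ?c a \<in> G" by (intro perm_group_comp[OF G])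
    moreover have "transpose p q \<circ> transpose a b = ?c a \<circ> ?c b \<circ> ?c b \<circ> ?c a"
    proof
      fix w show "(transpose p q \<circ> transpose a b) w = (?c a \<circ> ?c b \<circ> ?c b \<circ> ?c a) w"
        using 6 pq ab
        by (cases "w = p"; cases "w = q"; cases "w = a"; cases "w = b"; auto simp: transpose_def)
    qed
    ultimately show ?thesis by metis
  qed
qed

(* By induction
   over a product of transpositions, an even g lies in G and an odd g in (p q) G,
   using the previous lemma to absorb each new transposition. *)
lemma alt_group_subset_if_three_cycles:
  assumes G: "perm_group G" and R: "finite R" and pq: "p \<noteq> q" "p \<in> R" "q \<in> R"
    and cyc: "\<And>x. x \<in> R \<Longrightarrow> x \<noteq> p \<Longrightarrow> x \<noteq> q \<Longrightarrow> cycle_of_list [p, q, x] \<in> G"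
  shows "alt_group R \<subseteq> G"
proof
  fix g assume "g \<in> alt_group R"
  then have g: "g permutes R" "evenperm g" unfolding alt_group_def by auto
  have dt: "transpose p q \<circ> transpose a b \<in> G" if "a \<noteq> b" "a \<in> R" "b \<in> R" for a b
    using double_transposition_in_group[OF G pq(1) that cyc] by blast
  have "(evenperm g \<longrightarrow> g \<in> G) \<and> (\<not> evenperm g \<longrightarrow> transpose p q \<circ> g \<in> G)"
    using g(1) R
  proof (induction g rule: permutes_induct)
    case id
    show ?case using perm_group_id[OF G] evenperm_id by blast
  next
    case (swap a b h)
    have "permutation h" using swap.hyps(4) R permutation_permutes by blast
    then have parity: "evenperm (transpose a b \<circ> h) \<longleftrightarrow> \<not> evenperm h"
      using swap.hyps(3) by (simp add: evenperm_comp permutation_swap_id evenperm_swap)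
    show ?case
    proof (cases "evenperm h")
      case True
      then have "(transpose p q \<circ> transpose a b) \<circ> h \<in> G"
        using swap.IH perm_group_comp[OF G dt[OF swap.hyps(3,1,2)]] by blast
      then have "transpose p q \<circ> (transpose a b \<circ> h) \<in> G" by (simp only: o_assoc)
      with True parity show ?thesis by blast
    next
      case False
      have "inv (transpose p q \<circ> transpose a b) = transpose a b \<circ> transpose p q"
        by (rule inv_unique_comp) (simp_all add: fun_eq_iff)
      then have "(transpose a b \<circ> transpose p q) \<circ> (transpose p q \<circ> h) \<in> G"
        using swap.IH False perm_group_comp[OF G] perm_group_inv[OF G dt[OF swap.hyps(3,1,2)]]
        by metis
      moreover have "(transpose a b \<circ> transpose p q) \<circ> (transpose p q \<circ> h) = transpose a b \<circ> h"
        by (simp add: fun_eq_iff)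
      ultimately have "transpose a b \<circ> h \<in> G" by simp
      with False parity show ?thesis by blast
    qed
  qed
  then show "g \<in> G" using g(2) by blast
qed

lemma alt_group_insert:
  assumes G: "perm_group G" and R: "finite R" and alt: "alt_group R \<subseteq> G"
    and uv: "u \<noteq> v" "u \<in> R" "v \<in> R" and y: "y \<notin> R" and cyc: "cycle_of_list [u, v, y] \<in> G"
  shows "alt_group (insert y R) \<subseteq> G"
proof (rule alt_group_subset_if_three_cycles[OF G _ uv(1)])
  fix x assume x: "x \<in> insert y R" "x \<noteq> u" "x \<noteq> v"
  show "cycle_of_list [u, v, x] \<in> G"
  proof (cases "x = y")
    case True then show ?thesis using cyc by simp
  next
    case False
    then show ?thesis using alt uv x three_cycle_in_alt_group[of u R v x] by auto
  qed
qed (use R uv in auto)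

(* Let R be maximal among subsets of V with Alt(R) in G.  Then an element s of G that
   maps two points of R into R maps all of R into R: otherwise conjugating a 3-cycle
   (u v x) by s would yield (s u, s v, s x) with s x outside R, and R could grow. *)
lemma alt_group_maximal_invariant:
  assumes G: "perm_group G" and R: "finite R" and alt: "alt_group R \<subseteq> G" and RV: "R \<subseteq> V"
    and maximal: "\<forall>y \<in> V - R. \<not> alt_group (insert y R) \<subseteq> G"
    and s: "s \<in> G" "s permutes V"
    and uv: "u \<noteq> v" "u \<in> R" "v \<in> R" "s u \<in> R" "s v \<in> R" and x: "x \<in> R"
  shows "s x \<in> R"
proof (rule ccontr)
  assume sx: "s x \<notin> R"
  then have xuv: "x \<noteq> u" "x \<noteq> v" using uv by auto
  have "s \<circ> cycle_of_list [u, v, x] \<circ> inv s \<in> G"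
    using three_cycle_in_alt_group[of u R v x] alt uv x xuv s(1)
      perm_group_comp[OF G] perm_group_inv[OF G] by blast
  moreover have "s \<circ> cycle_of_list [u, v, x] \<circ> inv s = cycle_of_list [s u, s v, s x]"
    using conjugation_of_cycle[of "[u, v, x]" s] permutes_bij[OF s(2)] uv xuv by auto
  moreover have "s u \<noteq> s v" using permutes_inj[OF s(2)] uv by (auto dest: injD)
  ultimately have "alt_group (insert (s x) R) \<subseteq> G"
    using alt_group_insert[OF G R alt _ uv(4,5) sx] by simp
  moreover have "s x \<in> V" using permutes_in_image[OF s(2)] x RV by auto
  ultimately show False using maximal sx by simp
qed

(* Apply the previous lemma to a maximal R. *)
lemma alt_group_subset_by_spreading:
  assumes G: "perm_group G" and V: "finite V" and GV: "\<And>g. g \<in> G \<Longrightarrow> g permutes V"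
    and R0: "R0 \<subseteq> V" "alt_group R0 \<subseteq> G" and S: "S \<subseteq> G"
    and anchor: "\<And>s. s \<in> S \<Longrightarrow> \<exists>u\<in>R0. \<exists>v\<in>R0. u \<noteq> v \<and> s u \<in> R0 \<and> s v \<in> R0"
    and fill: "\<And>R. R0 \<subseteq> R \<Longrightarrow> R \<subseteq> V \<Longrightarrow>
                 (\<And>s x. s \<in> S \<Longrightarrow> x \<in> R \<Longrightarrow> s x \<in> R \<and> inv s x \<in> R) \<Longrightarrow> R = V"
  shows "alt_group V \<subseteq> G"
proof -
  define Fam where "Fam = {R. R0 \<subseteq> R \<and> R \<subseteq> V \<and> alt_group R \<subseteq> G}"
  have "finite Fam" unfolding Fam_def using V by (auto intro: finite_subset[of _ "Pow V"])
  moreover have "R0 \<in> Fam" unfolding Fam_def using R0 by simp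
  ultimately obtain R where RF: "R \<in> Fam" and max: "\<And>R'. R' \<in> Fam \<Longrightarrow> R \<subseteq> R' \<Longrightarrow> R = R'"
    using finite_has_maximal[of Fam] by blast
  have R0R: "R0 \<subseteq> R" and RV: "R \<subseteq> V" and alt: "alt_group R \<subseteq> G"
    using RF unfolding Fam_def by auto
  have R: "finite R" using RV V finite_subset by blast
  have maximal: "\<forall>y \<in> V - R. \<not> alt_group (insert y R) \<subseteq> G"
  proof (intro ballI notI)
    fix y assume y: "y \<in> V - R" and "alt_group (insert y R) \<subseteq> G"
    then have "insert y R \<in> Fam" using R0R RV unfolding Fam_def by auto
    then show False using max[of "insert y R"] y by auto
  qed
  note invariant = alt_group_maximal_invariant[OF G R alt RV maximal]
  have "R = V"
  proof (rule fill[OF R0R RV])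
    fix s x assume s: "s \<in> S" and x: "x \<in> R"
    obtain u v where uv: "u \<in> R0" "v \<in> R0" "u \<noteq> v" "s u \<in> R0" "s v \<in> R0"
      using anchor[OF s] by blast
    have sG: "s \<in> G" and sV: "s permutes V" using s S GV by auto
    have "s x \<in> R" using invariant[OF sG sV] uv x R0R by blast
    moreover have "inv s x \<in> R"
    proof (rule invariant[OF perm_group_inv[OF G sG] permutes_inv[OF sV]])
      show "s u \<noteq> s v" using permutes_inj[OF sV] uv(3) by (auto dest: injD)
      show "inv s (s u) \<in> R" "inv s (s v) \<in> R"
        using uv R0R permutes_inverses(2)[OF sV] by auto
    qed (use uv R0R x in auto)
    ultimately show "s x \<in> R \<and> inv s x \<in> R" by blast
  qed
  then show ?thesis using alt by simp
qed

lemma commutator_of_overlapping_permutations: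
  assumes x: "x permutes A" and y: "y permutes B" and AB: "A \<inter> B = {c}"
    and xc: "x c \<noteq> c" and yc: "y c \<noteq> c"
  shows "x \<circ> y \<circ> inv x \<circ> inv y = cycle_of_list [c, x c, y c]"
proof
  fix w
  have ix: "inv x permutes A" and iy: "inv y permutes B" using x y by (simp_all add: permutes_inv)
  have cA: "c \<in> A" and cB: "c \<in> B" using AB by auto
  have xcA: "x c \<in> A" "x c \<notin> B" using permutes_in_image[OF x] cA xc AB by auto
  have ycB: "y c \<in> B" "y c \<notin> A" using permutes_in_image[OF y] cB yc AB by auto
  have cyc: "cycle_of_list [c, x c, y c] w =
      (if w = c then x c else if w = x c then y c else if w = y c then c else w)"
    using xc yc xcA ycB by (auto simp: transpose_def)
  note facts = permutes_inverses[OF x] permutes_inverses[OF y]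
    permutes_not_in[OF x] permutes_not_in[OF y] permutes_not_in[OF ix] permutes_not_in[OF iy]
  consider "w = c" | "w = x c" | "w = y c" | "w \<in> B - {c, x c, y c}" | "w \<in> A - {c, x c, y c}"
    | "w \<notin> A" "w \<notin> B" using AB xcA ycB by blast
  then show "(x \<circ> y \<circ> inv x \<circ> inv y) w = cycle_of_list [c, x c, y c] w"
  proof cases
    case 1
    have "inv y c \<in> B" using permutes_in_image[OF iy] cB by auto
    moreover have "inv y c \<noteq> c" using yc permutes_inverses(1)[OF y, of c] by metis
    ultimately have "inv y c \<notin> A" using AB by auto
    then show ?thesis using 1 cyc facts by simp
  next
    case 2
    then show ?thesis using cyc xc yc xcA ycB facts by simp
  next
    case 3
    have "inv x c \<in> A" using permutes_in_image[OF ix] cA by auto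
    moreover have "inv x c \<noteq> c" using xc permutes_inverses(1)[OF x, of c] by metis
    ultimately have "inv x c \<notin> B" using AB by auto
    then show ?thesis using 3 cyc xcA ycB facts by simp
  next
    case 4
    have "inv y w \<in> B" "inv y w \<noteq> c" using 4 permutes_in_image[OF iy] facts by auto
    then have "inv y w \<notin> A" "w \<notin> A" using 4 AB by auto
    then show ?thesis using 4 cyc xcA ycB facts by simp
  next
    case 5
    have "inv x w \<in> A" "inv x w \<noteq> c" using 5 permutes_in_image[OF ix] facts by auto
    then have "inv x w \<notin> B" "w \<notin> B" using 5 AB by auto
    then show ?thesis using 5 cyc xcA ycB facts by simp
  next
    case 6
    then show ?thesis using cyc xcA ycB facts cA cB by auto
  qed
qed

lemma permutes_disjoint_commute:
  assumes f: "f permutes A" and g: "g permutes B" and AB: "A \<inter> B = {}"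
  shows "f \<circ> g = g \<circ> f"
proof
  fix x
  consider "x \<in> A" | "x \<in> B" | "x \<notin> A" "x \<notin> B" using AB by blast
  then show "(f \<circ> g) x = (g \<circ> f) x"
  proof cases
    case 1
    then have "x \<notin> B" "f x \<notin> B" using AB permutes_in_image[OF f] by auto
    then show ?thesis using permutes_not_in[OF g] by simp
  next
    case 2
    then have "x \<notin> A" "g x \<notin> A" using AB permutes_in_image[OF g] by auto
    then show ?thesis using permutes_not_in[OF f] by simp
  next
    case 3
    then show ?thesis using permutes_not_in[OF f] permutes_not_in[OF g] by simp
  qed
qed

lemma permutes_disjoint_comp_apply:
  assumes f: "f permutes A" and g: "g permutes B" and AB: "A \<inter> B = {}"
  shows "(f \<circ> g) x = (if x \<in> A then f x else g x)"
proof (cases "x \<in> B")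
  case True
  then have "x \<notin> A" "g x \<notin> A" using AB permutes_in_image[OF g] by auto
  then show ?thesis using permutes_not_in[OF f] by simp
qed (use permutes_not_in[OF f] permutes_not_in[OF g] in simp)

lemma funpow_comp_commute:
  assumes comm: "f \<circ> g = g \<circ> f"
  shows "(f \<circ> g) ^^ n = f ^^ n \<circ> g ^^ n"
proof -
  have fg: "f (g x) = g (f x)" for x using comm by (metis comp_apply)
  have g_fpow: "g ((f ^^ n) x) = (f ^^ n) (g x)" for n x
    by (induction n) (simp_all flip: fg)
  show ?thesis
  proof (induction n)
    case (Suc n)
    then show ?case by (simp add: fun_eq_iff g_fpow funpow_swap1)
  qed simp
qed

(* Every partial bijection of a finite set S extends to a permutation of S; this is
   how the immersion is completed to a covering. *)
lemma partial_bijection_extends: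
  assumes S: "finite S" and Q: "Q \<subseteq> S \<times> S"
    and sv: "single_valued Q" and sv_inv: "single_valued (Q\<inverse>)"
  shows "\<exists>\<tau>. \<tau> permutes S \<and> (\<forall>(x, y) \<in> Q. \<tau> x = y)"
proof -
  define D where "D = Domain Q"
  define f where "f x = (THE y. (x, y) \<in> Q)" for x
  have fx: "(x, y) \<in> Q \<Longrightarrow> f x = y" for x y
    unfolding f_def using sv by (auto simp: single_valued_def)
  have inj: "inj_on f D" unfolding inj_on_def D_def using fx sv_inv by (force simp: single_valued_def)
  have DS: "D \<subseteq> S" "f ` D \<subseteq> S" unfolding D_def using Q fx by force+
  have "card (S - D) = card (S - f ` D)"
    using S DS inj by (simp add: card_Diff_subset finite_subset card_image)
  then obtain g where g: "bij_betw g (S - D) (S - f ` D)"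
    using finite_same_card_bij S by (meson finite_Diff)
  define \<tau> where "\<tau> x = (if x \<in> D then f x else if x \<in> S then g x else x)" for x
  have "bij_betw \<tau> D (f ` D)"
    using inj by (simp add: bij_betw_def inj_on_def \<tau>_def image_def)
  moreover have "bij_betw \<tau> (S - D) (S - f ` D)"
    using g by (rule bij_betw_cong[THEN iffD1, rotated]) (simp add: \<tau>_def)
  ultimately have "bij_betw \<tau> (D \<union> (S - D)) (f ` D \<union> (S - f ` D))"
    by (rule bij_betw_combine) auto
  moreover have "D \<union> (S - D) = S" "f ` D \<union> (S - f ` D) = S" using DS by auto
  ultimately have "\<tau> permutes S"
    by (intro bij_imp_permutes) (use DS in \<open>auto simp: \<tau>_def\<close>)
  moreover have "\<forall>(x, y) \<in> Q. \<tau> x = y" using fx by (auto simp: \<tau>_def D_def)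
  ultimately show ?thesis by blast
qed

definition rotation :: "nat \<Rightarrow> nat \<Rightarrow> nat \<Rightarrow> 'a + nat \<Rightarrow> 'a + nat" where
  "rotation L P m w = (case w of
     Inl z \<Rightarrow> Inl z
   | Inr k \<Rightarrow> if L \<le> k \<and> k < L + P then Inr (L + (k - L + m) mod P) else Inr k)"

lemma rotation_inside: "L \<le> k \<Longrightarrow> k < L + P \<Longrightarrow> rotation L P m (Inr k) = Inr (L + (k - L + m) mod P)"
  by (simp add: rotation_def)

lemma rotation_outside: "w \<notin> Inr ` {L..<L + P} \<Longrightarrow> rotation L P m w = w"
  by (cases w) (auto simp: rotation_def)

lemma rotation_add: "rotation L P m \<circ> rotation L P m' = rotation L P (m + m')"
proof
  fix w :: "'a + nat"
  show "(rotation L P m \<circ> rotation L P m') w = rotation L P (m + m') w"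
  proof (cases "w \<in> Inr ` {L..<L + P}")
    case True
    then obtain k where k: "w = Inr k" "L \<le> k" "k < L + P" by auto
    then have "(k - L + m') mod P < P" by simp
    then have "rotation L P m (rotation L P m' w) = Inr (L + ((k - L + m') mod P + m) mod P)"
      using k by (simp add: rotation_inside)
    also have "((k - L + m') mod P + m) mod P = (k - L + (m + m')) mod P"
      using mod_add_left_eq[of "k - L + m'" P m] by (simp add: ac_simps)
    finally show ?thesis using k by (simp add: rotation_inside)
  qed (simp add: rotation_outside)
qed

lemma rotation_mod: "rotation L P (m mod P) = rotation L P m"
proof
  fix w :: "'a + nat"
  show "rotation L P (m mod P) w = rotation L P m w"
  proof (cases "w \<in> Inr ` {L..<L + P}")
    case True
    then obtain k where k: "w = Inr k" "L \<le> k" "k < L + P" by auto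
    have "(k - L + m mod P) mod P = (k - L + m) mod P" by (rule mod_add_right_eq)
    then show ?thesis using k by (simp add: rotation_inside)
  qed (simp add: rotation_outside)
qed

lemma rotation_0: "rotation L P 0 = id"
  by (auto simp: fun_eq_iff rotation_def split: sum.split)

lemma rotation_funpow: "rotation L P m ^^ n = rotation L P (m * n)"
  by (induction n) (simp_all add: rotation_0 rotation_add)

(* A rotation permutes its block, its inverse being the rotation by m * (P - 1) steps. *)
lemma rotation_permutes:
  assumes "P > 0" shows "rotation L P m permutes Inr ` {L..<L + P}"
proof -
  have "rotation L P m \<circ> rotation L P (m * (P - 1)) = rotation L P (m + m * (P - 1))"
    by (rule rotation_add)
  also have "m + m * (P - 1) = m * P" using assms by (cases P) simp_all
  also have "rotation L P (m * P) = rotation L P ((m * P) mod P)" by (rule rotation_mod[symmetric])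
  finally have inverse: "rotation L P m \<circ> rotation L P (m * (P - 1)) = id"
    by (simp only: mod_mult_self2_is_0 rotation_0)
  then have "rotation L P (m * (P - 1)) \<circ> rotation L P m = id"
    by (simp add: rotation_add add.commute)
  then have "bij (rotation L P m)" using inverse by (rule o_bij)
  then show ?thesis unfolding permutes_def by (metis bij_pointE rotation_outside)
qed

(* A covering of the rose is the same as an r-tuple of permutations of its vertex
   set: label i sends u to pi i u. *)
definition edges_of :: "nat \<Rightarrow> 'b set \<Rightarrow> (nat \<Rightarrow> 'b \<Rightarrow> 'b) \<Rightarrow> ('b \<times> nat \<times> 'b) set" where
  "edges_of r V \<pi> = {(u, i, \<pi> i u) | u i. u \<in> V \<and> i < r}"

(* Adjacency is symmetric, so a graph is connected once every vertex is reachable from one. *)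
lemma connected_graph_from_root:
  assumes "\<And>w. w \<in> V \<Longrightarrow> (c, w) \<in> (adj E)\<^sup>*"
  shows "connected_graph V E"
proof -
  have sym: "(adj E)\<inverse> = adj E" unfolding adj_def by auto
  have "(w, c) \<in> (adj E)\<^sup>*" if "w \<in> V" for w
    using assms[OF that] rtrancl_converseI[of c w "adj E"] by (simp add: sym)
  then show ?thesis unfolding connected_graph_def using assms by (blast intro: rtrancl_trans)
qed

locale perm_covering =
  fixes r :: nat and V :: "'b set" and \<pi> :: "nat \<Rightarrow> 'b \<Rightarrow> 'b"
  assumes perm: "\<And>i. i < r \<Longrightarrow> \<pi> i permutes V"
begin

lemma edges_of_iff: "(u, i, v) \<in> edges_of r V \<pi> \<longleftrightarrow> u \<in> V \<and> i < r \<and> v = \<pi> i u"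
  unfolding edges_of_def by auto

lemma edges_of_in_edge: "i < r \<Longrightarrow> v \<in> V \<Longrightarrow> (u, i, v) \<in> edges_of r V \<pi> \<longleftrightarrow> u = inv (\<pi> i) v"
  using perm[of i] by (auto simp: edges_of_iff permutes_inverses permutes_in_image permutes_inv)

lemma gen_act_edges_of: "i < r \<Longrightarrow> gen_act V (edges_of r V \<pi>) i = \<pi> i"
  by (auto simp: fun_eq_iff gen_act_def edges_of_iff permutes_not_in[OF perm])

lemma gen_act_inv_edges_of: "i < r \<Longrightarrow> gen_act_inv V (edges_of r V \<pi>) i = inv (\<pi> i)"
  using permutes_not_in[OF permutes_inv[OF perm]]
  by (auto simp: fun_eq_iff gen_act_inv_def edges_of_in_edge)

lemma covering_edges_of: "covering r V (edges_of r V \<pi>)"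
  unfolding covering_def labelled_graph_def
proof (intro conjI ballI allI impI)
  fix e assume "e \<in> edges_of r V \<pi>"
  then show "case e of (u, i, v) \<Rightarrow> u \<in> V \<and> v \<in> V \<and> i < r"
    using perm by (auto simp: edges_of_def permutes_in_image)
next
  fix u i assume "u \<in> V" "i < r"
  then show "\<exists>!v. (u, i, v) \<in> edges_of r V \<pi>" "\<exists>!v. (v, i, u) \<in> edges_of r V \<pi>"
    by (simp add: edges_of_iff, simp add: edges_of_in_edge)
qed

lemma adj_edges_ofD:
  assumes "(w, w') \<in> adj (edges_of r V \<pi>)"
  shows "\<exists>i<r. w' = \<pi> i w \<or> w' = inv (\<pi> i) w"
proof -
  obtain i where "(w, i, w') \<in> edges_of r V \<pi> \<or> (w', i, w) \<in> edges_of r V \<pi>"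
    using assms unfolding adj_def by blast
  then have i: "i < r" and "w' = \<pi> i w \<or> w = \<pi> i w' \<and> w' \<in> V"
    by (auto simp: edges_of_iff)
  then have "w' = \<pi> i w \<or> w' = inv (\<pi> i) w" using permutes_inverses(2)[OF perm[OF i]] by auto
  then show ?thesis using i by blast
qed

lemma adj_edges_ofI:
  "w \<in> V \<Longrightarrow> i < r \<Longrightarrow> (w, \<pi> i w) \<in> adj (edges_of r V \<pi>) \<and> (\<pi> i w, w) \<in> adj (edges_of r V \<pi>)"
  unfolding adj_def by (auto simp: edges_of_iff)

lemma reachable_in_invariant_set:
  assumes "(c, w) \<in> (adj (edges_of r V \<pi>))\<^sup>*" and "c \<in> R"
    and closed: "\<And>i x. i < r \<Longrightarrow> x \<in> R \<Longrightarrow> \<pi> i x \<in> R \<and> inv (\<pi> i) x \<in> R"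
  shows "w \<in> R"
  using assms(1)
proof induction
  case (step y z)
  then obtain i where "i < r" "z = \<pi> i y \<or> z = inv (\<pi> i) y" using adj_edges_ofD by blast
  then show ?case using closed[OF _ step.IH] by auto
qed (rule assms(2))

abbreviation monodromy where "monodromy \<equiv> monodromy_group r V (edges_of r V \<pi>)"

lemma monodromy_generator: "i < r \<Longrightarrow> \<pi> i \<in> monodromy"
  using mg_gen[OF mg_id, of i r V "edges_of r V \<pi>"] by (simp add: gen_act_edges_of)

lemma monodromy_generator_inv: "i < r \<Longrightarrow> inv (\<pi> i) \<in> monodromy"
  using mg_inv[OF mg_id, of i r V "edges_of r V \<pi>"] by (simp add: gen_act_inv_edges_of)

lemma monodromy_permutes: "p \<in> monodromy \<Longrightarrow> p permutes V"
proof (induction rule: monodromy_group.induct)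
  case mg_id then show ?case by (rule permutes_id)
next
  case (mg_gen p i) then show ?case using gen_act_edges_of perm permutes_compose by metis
next
  case (mg_inv p i) then show ?case using gen_act_inv_edges_of perm permutes_compose permutes_inv by metis
qed

lemma monodromy_comp: "p \<in> monodromy \<Longrightarrow> q \<in> monodromy \<Longrightarrow> p \<circ> q \<in> monodromy"
proof (induction rule: monodromy_group.induct)
  case (mg_gen p i)
  then have "gen_act V (edges_of r V \<pi>) i \<circ> (p \<circ> q) \<in> monodromy" by (intro monodromy_group.mg_gen)
  then show ?case by (simp only: o_assoc)
next
  case (mg_inv p i)
  then have "gen_act_inv V (edges_of r V \<pi>) i \<circ> (p \<circ> q) \<in> monodromy" by (intro monodromy_group.mg_inv)
  then show ?case by (simp only: o_assoc)
qed simp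

lemma monodromy_inv: "p \<in> monodromy \<Longrightarrow> inv p \<in> monodromy"
proof (induction rule: monodromy_group.induct)
  case mg_id then show ?case using monodromy_group.mg_id inv_id by metis
next
  case (mg_gen p i)
  have "inv (\<pi> i \<circ> p) = inv p \<circ> inv (\<pi> i)"
    using o_inv_distrib permutes_bij perm mg_gen monodromy_permutes by metis
  then show ?case using monodromy_comp mg_gen monodromy_generator_inv gen_act_edges_of by metis
next
  case (mg_inv p i)
  have "inv (inv (\<pi> i) \<circ> p) = inv p \<circ> \<pi> i"
    using o_inv_distrib permutes_bij perm mg_inv monodromy_permutes permutes_inv inv_inv_eq by metis
  then show ?case using monodromy_comp mg_inv monodromy_generator gen_act_inv_edges_of by metis
qed

lemma monodromy_perm_group: "perm_group monodromy"
  unfolding perm_group_def by (intro conjI ballI monodromy_group.mg_id monodromy_comp monodromy_inv)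

lemma monodromy_even:
  assumes "finite V" and even: "\<And>i. i < r \<Longrightarrow> evenperm (\<pi> i)"
  shows "p \<in> monodromy \<Longrightarrow> evenperm p"
proof (induction rule: monodromy_group.induct)
  case (mg_gen p i)
  have "permutation p" "permutation (\<pi> i)"
    using mg_gen monodromy_permutes perm assms(1) permutation_permutes by blast+
  then have "evenperm (\<pi> i \<circ> p)" using evenperm_comp even mg_gen by metis
  then show ?case using gen_act_edges_of mg_gen by metis
next
  case (mg_inv p i)
  have "permutation p" "permutation (\<pi> i)"
    using mg_inv monodromy_permutes perm assms(1) permutation_permutes by blast+
  then have "evenperm (inv (\<pi> i) \<circ> p)"
    using evenperm_comp evenperm_inv permutation_inverse even mg_inv by metis
  then show ?case using gen_act_inv_edges_of mg_inv by metis
qed simp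

end

lemma non_covering_free_half_edge:
  assumes imm: "immersion r V E" and nc: "\<not> covering r V E"
  obtains i z where "i < r" "z \<in> V" "(\<forall>v. (z, i, v) \<notin> E) \<or> (\<forall>v. (v, i, z) \<notin> E)"
proof -
  have "labelled_graph r V E" using imm unfolding immersion_def by blast
  with nc have "\<exists>z\<in>V. \<exists>i<r. \<not> (\<exists>!v. (z, i, v) \<in> E) \<or> \<not> (\<exists>!v. (v, i, z) \<in> E)"
    unfolding covering_def by meson
  then obtain z i where zi: "z \<in> V" "i < r"
    and not_unique: "\<not> (\<exists>!v. (z, i, v) \<in> E) \<or> \<not> (\<exists>!v. (v, i, z) \<in> E)"
    by blast
  have "(z, i, v) \<in> E \<Longrightarrow> (z, i, w) \<in> E \<Longrightarrow> v = w"
    and "(v, i, z) \<in> E \<Longrightarrow> (w, i, z) \<in> E \<Longrightarrow> v = w" for v w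
    using imm zi unfolding immersion_def by blast+
  with not_unique have "(\<forall>v. (z, i, v) \<notin> E) \<or> (\<forall>v. (v, i, z) \<notin> E)" by blast
  with zi that show ?thesis by blast
qed

(* The vertices of Z (tagged Inl), together with the attaching vertex Inr 1 for the
   label i0 that carries the missing edge. *)
definition core :: "'a set \<Rightarrow> nat \<Rightarrow> nat \<Rightarrow> ('a + nat) set" where
  "core V i0 i = (if i = i0 then insert (Inr 1) (Inl ` V) else Inl ` V)"

(* Completion of the immersion: for each label, extend the partial bijection given by
   the edges of Z (plus, for label i0, one new edge between z0 and Inr 1 in the free
   direction) to a permutation of the core. *)
lemma immersion_completion:
  assumes imm: "immersion r V E" and V: "finite V" and i0: "i0 < r" and z0: "z0 \<in> V"
    and free: "(\<forall>v. (z0, i0, v) \<notin> E) \<or> (\<forall>v. (v, i0, z0) \<notin> E)"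
  obtains \<rho> where "\<And>i. i < r \<Longrightarrow> \<rho> i permutes core V i0 i"
    and "\<And>u i v. (u, i, v) \<in> E \<Longrightarrow> \<rho> i (Inl u) = Inl v"
    and "\<rho> i0 (Inl z0) = Inr 1 \<or> \<rho> i0 (Inr 1) = Inl z0"
proof -
  have lab: "\<And>u i v. (u, i, v) \<in> E \<Longrightarrow> u \<in> V \<and> v \<in> V \<and> i < r"
    using imm unfolding immersion_def labelled_graph_def by blast
  have out_unique: "\<And>u i v w. (u, i, v) \<in> E \<Longrightarrow> (u, i, w) \<in> E \<Longrightarrow> v = w"
    and in_unique: "\<And>u i v w. (v, i, u) \<in> E \<Longrightarrow> (w, i, u) \<in> E \<Longrightarrow> v = w"
    using imm lab unfolding immersion_def by blast+
  define link :: "(('a + nat) \<times> ('a + nat)) set" where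
    "link = (if \<forall>v. (z0, i0, v) \<notin> E then {(Inl z0, Inr 1)} else {(Inr 1, Inl z0)})"
  define Q :: "nat \<Rightarrow> (('a + nat) \<times> ('a + nat)) set" where
    "Q i = {(Inl u, Inl v) | u v. (u, i, v) \<in> E} \<union> (if i = i0 then link else {})" for i
  have "\<exists>\<rho>. \<rho> permutes core V i0 i \<and> (\<forall>(x, y) \<in> Q i. \<rho> x = y)" if i: "i < r" for i
  proof (rule partial_bijection_extends)
    show "finite (core V i0 i)" using V unfolding core_def by simp
    show "Q i \<subseteq> core V i0 i \<times> core V i0 i"
      using lab z0 unfolding Q_def core_def link_def by auto
    show "single_valued (Q i)"
      using out_unique unfolding single_valued_def Q_def link_def by (auto split: if_splits)
    show "single_valued ((Q i)\<inverse>)"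
      using in_unique free unfolding single_valued_def Q_def link_def by (auto split: if_splits)
  qed
  then have "\<forall>i. \<exists>\<rho>i. i < r \<longrightarrow> \<rho>i permutes core V i0 i \<and> (\<forall>(x, y) \<in> Q i. \<rho>i x = y)"
    by blast
  from choice[OF this] obtain \<rho>
    where \<rho>: "\<And>i. i < r \<Longrightarrow> \<rho> i permutes core V i0 i \<and> (\<forall>(x, y) \<in> Q i. \<rho> i x = y)"
    by blast
  have \<rho>Q: "\<rho> i x = y" if "i < r" "(x, y) \<in> Q i" for i x y
    using \<rho>[OF that(1)] that(2) by auto
  show ?thesis
  proof (rule that)
    show "\<rho> i permutes core V i0 i" if "i < r" for i using \<rho>[OF that] by blast
    show "\<rho> i (Inl u) = Inl v" if e: "(u, i, v) \<in> E" for u i v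
    proof (rule \<rho>Q)
      show "i < r" using lab[OF e] by blast
      show "(Inl u, Inl v) \<in> Q i" using e unfolding Q_def by blast
    qed
    have "link \<subseteq> Q i0" unfolding Q_def by simp
    then show "\<rho> i0 (Inl z0) = Inr 1 \<or> \<rho> i0 (Inr 1) = Inl z0"
      using \<rho>Q[OF i0] unfolding link_def by (cases "\<forall>v. (z0, i0, v) \<notin> E") auto
  qed
qed

lemma common_even_period:
  assumes "f permutes A" "g permutes B" "finite A" "finite B"
  obtains M where "f ^^ M = id" "g ^^ M = id" "even M" "M \<ge> 4"
proof -
  obtain m n where m: "f ^^ m = id" "m > 0" and n: "g ^^ n = id" "n > 0"
    using permutation_is_nilpotent assms permutation_permutes by metis
  have "f ^^ (4 * m * n) = id" "g ^^ (4 * n * m) = id"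
    using m n by (metis funpow_mult id_funpow mult.commute)+
  moreover have "4 * m * n \<ge> 4" using m n by simp
  ultimately show ?thesis using that[of "4 * m * n"] by (simp add: ac_simps)
qed

(* Given the completed permutations rho i of the core and a common
   even period M of rho i0 and rho j1, put P = M + 1 and N = M * M, so that N = 1 (mod P)
   while rho i0, rho j1 and every transposition satisfy f ^^ N = id.  The covering Y has
   vertices Inl ` VZ together with Inr 0, ..., Inr (2P - 2); label i0 additionally rotates
   the block A = Inr (P - 1), ..., Inr (2P - 2), label j1 rotates B = Inr 0, ..., Inr (P - 1),
   and each label is finally made even by a transposition on points it does not touch. *)
locale alternating_completion =
  fixes r :: nat and VZ :: "'a set" and EZ :: "('a \<times> nat \<times> 'a) set"
    and i0 j1 :: nat and z0 :: 'a and \<rho> :: "nat \<Rightarrow> 'a + nat \<Rightarrow> 'a + nat" and M :: nat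
  assumes labels: "i0 < r" "j1 < r" "i0 \<noteq> j1"
    and finite_VZ: "finite VZ" and z0: "z0 \<in> VZ"
    and connected_Z: "connected_graph VZ EZ" and labelled_Z: "labelled_graph r VZ EZ"
    and \<rho>_permutes: "\<And>i. i < r \<Longrightarrow> \<rho> i permutes core VZ i0 i"
    and \<rho>_edges: "\<And>u i v. (u, i, v) \<in> EZ \<Longrightarrow> \<rho> i (Inl u) = Inl v"
    and \<rho>_attach: "\<rho> i0 (Inl z0) = Inr 1 \<or> \<rho> i0 (Inr 1) = Inl z0"
    and period: "\<rho> i0 ^^ M = id" "\<rho> j1 ^^ M = id" "even M" "M \<ge> 4"
begin

definition P :: nat where "P = M + 1"
definition N :: nat where "N = M * M"

lemma P_ge_5: "P \<ge> 5"
  using period(4) unfolding P_def by simp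

lemma N_mod_P: "N mod P = 1"
proof -
  obtain m where m: "M = Suc m" using period(4) by (cases M) auto
  have "N = 1 + m * P" unfolding N_def P_def by (simp add: m algebra_simps)
  then have "N mod P = 1 mod P" by (simp only: mod_mult_self1)
  then show ?thesis using P_ge_5 by simp
qed

lemma \<rho>_funpow_N: "\<rho> i0 ^^ N = id" "\<rho> j1 ^^ N = id"
  unfolding N_def using period(1,2) by (metis funpow_mult id_funpow)+

lemma transpose_funpow_N: "transpose a b ^^ N = id"
proof -
  obtain k where "N = 2 * k" using period(3) unfolding N_def by auto
  moreover have "transpose a b ^^ 2 = id" by (simp add: numeral_2_eq_2)
  ultimately show ?thesis by (metis funpow_mult id_funpow)
qed

(* c is the only common point of the two long cycles sigmaA and sigmaB. *)
definition c :: "'a + nat" where "c = Inr (P - 1)"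
definition A :: "('a + nat) set" where "A = Inr ` {P - 1..<P - 1 + P}"
definition B :: "('a + nat) set" where "B = Inr ` {0..<P}"
definition \<sigma>A :: "'a + nat \<Rightarrow> 'a + nat" where "\<sigma>A = rotation (P - 1) P 1"
definition \<sigma>B :: "'a + nat \<Rightarrow> 'a + nat" where "\<sigma>B = rotation 0 P 1"

definition \<chi> :: "nat \<Rightarrow> 'a + nat \<Rightarrow> 'a + nat" where
  "\<chi> i = (if i = i0 then \<sigma>A else if i = j1 then \<sigma>B else id)"
definition C :: "nat \<Rightarrow> ('a + nat) set" where
  "C i = (if i = i0 then A else if i = j1 then B else {})"
definition T :: "nat \<Rightarrow> ('a + nat) set" where
  "T i = (if i = j1 then {Inr (P + 1), Inr (P + 2)} else {Inr 2, Inr 3})"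
definition \<tau> :: "nat \<Rightarrow> 'a + nat \<Rightarrow> 'a + nat" where
  "\<tau> i = (if i = j1 then transpose (Inr (P + 1)) (Inr (P + 2)) else transpose (Inr 2) (Inr 3))"
definition parity_fix :: "nat \<Rightarrow> 'a + nat \<Rightarrow> 'a + nat" where
  "parity_fix i = (if evenperm (\<rho> i \<circ> \<chi> i) then id else \<tau> i)"
definition \<pi> :: "nat \<Rightarrow> 'a + nat \<Rightarrow> 'a + nat" where
  "\<pi> i = \<rho> i \<circ> \<chi> i \<circ> parity_fix i"
definition VY :: "('a + nat) set" where "VY = Inl ` VZ \<union> Inr ` {0..<2 * P - 1}"
definition EY :: "(('a + nat) \<times> nat \<times> ('a + nat)) set" where "EY = edges_of r VY \<pi>"

lemma \<sigma>A_permutes: "\<sigma>A permutes A" and \<sigma>B_permutes: "\<sigma>B permutes B"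
  using rotation_permutes[of P "P - 1" 1] rotation_permutes[of P 0 1] P_ge_5
  unfolding \<sigma>A_def \<sigma>B_def A_def B_def by simp_all

lemma \<chi>_permutes: "\<chi> i permutes C i"
  unfolding \<chi>_def C_def using \<sigma>A_permutes \<sigma>B_permutes permutes_id by auto

lemma parity_fix_permutes: "parity_fix i permutes T i"
  unfolding parity_fix_def \<tau>_def T_def by (auto intro: permutes_swap_id permutes_id)

lemma supports_disjoint: "core VZ i0 i \<inter> C i = {}" "(core VZ i0 i \<union> C i) \<inter> T i = {}"
  unfolding core_def C_def T_def A_def B_def using P_ge_5 labels by auto

lemma supports_in_VY: "core VZ i0 i \<subseteq> VY" "C i \<subseteq> VY" "T i \<subseteq> VY"
  unfolding core_def C_def T_def A_def B_def VY_def using P_ge_5 by auto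

lemma finite_VY: "finite VY"
  unfolding VY_def using finite_VZ by simp

lemma \<rho>\<chi>_permutes: "i < r \<Longrightarrow> \<rho> i \<circ> \<chi> i permutes core VZ i0 i \<union> C i"
  using permutes_subset \<rho>_permutes \<chi>_permutes permutes_compose by (metis Un_upper1 Un_upper2)

lemma \<pi>_apply:
  "i < r \<Longrightarrow> \<pi> i w = (if w \<in> core VZ i0 i then \<rho> i w else if w \<in> C i then \<chi> i w else parity_fix i w)"
  unfolding \<pi>_def
  using permutes_disjoint_comp_apply[OF \<rho>\<chi>_permutes parity_fix_permutes supports_disjoint(2)]
    permutes_disjoint_comp_apply[OF \<rho>_permutes \<chi>_permutes supports_disjoint(1)]
  by simp

lemma \<pi>_permutes: "i < r \<Longrightarrow> \<pi> i permutes VY"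
  unfolding \<pi>_def using \<rho>\<chi>_permutes parity_fix_permutes supports_in_VY
  by (meson le_sup_iff permutes_compose permutes_subset)

lemma \<pi>_even: "i < r \<Longrightarrow> evenperm (\<pi> i)"
proof -
  assume i: "i < r"
  have "permutation (\<rho> i \<circ> \<chi> i)"
    using \<rho>\<chi>_permutes[OF i] finite_VY supports_in_VY permutation_permutes
    by (meson finite_subset le_sup_iff)
  moreover have "\<not> evenperm (\<tau> i)" unfolding \<tau>_def by (simp add: evenperm_swap)
  ultimately show ?thesis
    unfolding \<pi>_def parity_fix_def \<tau>_def
    by (auto simp: evenperm_comp permutation_swap_id evenperm_swap split: if_splits)
qed

(* The N-th powers of the generators pi i0 and pi j1 are exactly the long cycles:
   the three disjoint factors commute, and N kills rho and tau but acts as 1 on the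
   rotations of length P. *)
lemma \<pi>_funpow_N: "\<pi> i0 ^^ N = \<sigma>A" "\<pi> j1 ^^ N = \<sigma>B"
proof -
  have split: "\<pi> i ^^ N = \<rho> i ^^ N \<circ> \<chi> i ^^ N \<circ> parity_fix i ^^ N" if "i < r" for i
  proof -
    have "\<pi> i ^^ N = (\<rho> i \<circ> \<chi> i) ^^ N \<circ> parity_fix i ^^ N"
      unfolding \<pi>_def by (intro funpow_comp_commute permutes_disjoint_commute[OF \<rho>\<chi>_permutes[OF that]
            parity_fix_permutes supports_disjoint(2)])
    also have "(\<rho> i \<circ> \<chi> i) ^^ N = \<rho> i ^^ N \<circ> \<chi> i ^^ N"
      by (intro funpow_comp_commute permutes_disjoint_commute[OF \<rho>_permutes[OF that]
            \<chi>_permutes supports_disjoint(1)])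
    finally show ?thesis .
  qed
  have parity: "parity_fix i ^^ N = id" for i
    unfolding parity_fix_def \<tau>_def by (simp add: transpose_funpow_N)
  have rot: "rotation L P 1 ^^ N = rotation L P 1" for L :: nat
  proof -
    have "rotation L P 1 ^^ N = rotation L P (N mod P)"
      by (simp add: rotation_funpow rotation_mod)
    then show ?thesis by (simp only: N_mod_P)
  qed
  show "\<pi> i0 ^^ N = \<sigma>A" "\<pi> j1 ^^ N = \<sigma>B"
    using split[OF labels(1)] split[OF labels(2)] \<rho>_funpow_N parity rot labels(3)
    unfolding \<chi>_def \<sigma>A_def \<sigma>B_def by simp_all
qed

sublocale perm_covering r VY \<pi>
  by unfold_locales (rule \<pi>_permutes)

lemma \<pi>_on_core: "i < r \<Longrightarrow> w \<in> core VZ i0 i \<Longrightarrow> \<pi> i w = \<rho> i w"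
  by (simp add: \<pi>_apply)

lemma \<pi>_Inl: "i < r \<Longrightarrow> z \<in> VZ \<Longrightarrow> \<pi> i (Inl z) = \<rho> i (Inl z)"
  by (simp add: \<pi>_on_core core_def)

lemma \<pi>_on_C: "i < r \<Longrightarrow> w \<in> C i \<Longrightarrow> \<pi> i w = \<chi> i w"
  using supports_disjoint(1)[of i] by (auto simp: \<pi>_apply)

lemma \<pi>_outside: "i < r \<Longrightarrow> w \<notin> core VZ i0 i \<Longrightarrow> w \<notin> C i \<Longrightarrow> w \<notin> T i \<Longrightarrow> \<pi> i w = w"
  using permutes_not_in[OF parity_fix_permutes] by (simp add: \<pi>_apply)

lemma \<pi>_i0_A: "j + 1 < P \<Longrightarrow> \<pi> i0 (Inr (P - 1 + j)) = Inr (P - 1 + (j + 1))"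
proof -
  assume j: "j + 1 < P"
  then have "P - 1 + j \<in> {P - 1..<P - 1 + P}" by auto
  then have "Inr (P - 1 + j) \<in> C i0" unfolding C_def A_def by (simp only: simp_thms if_True imageI)
  then show ?thesis
    using j \<pi>_on_C[OF labels(1)] by (simp add: \<chi>_def \<sigma>A_def rotation_inside)
qed

lemma \<pi>_j1_B: "k < P \<Longrightarrow> \<pi> j1 (Inr k) = Inr ((k + 1) mod P)"
proof -
  assume k: "k < P"
  then have "Inr k \<in> C j1" using labels(3) by (auto simp: C_def B_def)
  then show ?thesis
    using k labels(3) \<pi>_on_C[OF labels(2)] by (simp add: \<chi>_def \<sigma>B_def rotation_inside)
qed

lemma \<pi>_fixed:
  "\<pi> i0 (Inr 0) = Inr 0" "\<pi> j1 (Inr P) = Inr P"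
  "i < r \<Longrightarrow> i \<noteq> i0 \<Longrightarrow> i \<noteq> j1 \<Longrightarrow> k \<ge> 4 \<Longrightarrow> \<pi> i (Inr k) = Inr k"
  using labels P_ge_5 by (auto intro!: \<pi>_outside simp: core_def C_def A_def B_def T_def)

abbreviation G where "G \<equiv> monodromy_group r VY EY"

(* The commutator of the two long cycles is a 3-cycle in the monodromy group. *)
lemma three_cycle_in_monodromy: "cycle_of_list [c, Inr P, Inr 0] \<in> G"
proof -
  have \<sigma>: "\<sigma>A \<in> G" "\<sigma>B \<in> G"
    using perm_group_funpow[OF monodromy_perm_group monodromy_generator] labels \<pi>_funpow_N
    unfolding EY_def by metis+
  have AB: "A \<inter> B = {c}" unfolding A_def B_def c_def using P_ge_5 by auto
  have "\<sigma>A c = Inr P" "\<sigma>B c = Inr 0"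
    unfolding \<sigma>A_def \<sigma>B_def c_def using P_ge_5 by (simp_all add: rotation_inside)
  moreover have "c \<noteq> Inr P" "c \<noteq> Inr 0" unfolding c_def using P_ge_5 by auto
  ultimately have "\<sigma>A \<circ> \<sigma>B \<circ> inv \<sigma>A \<circ> inv \<sigma>B = cycle_of_list [c, Inr P, Inr 0]"
    using commutator_of_overlapping_permutations[OF \<sigma>A_permutes \<sigma>B_permutes AB] by simp
  moreover have "\<sigma>A \<circ> \<sigma>B \<circ> inv \<sigma>A \<circ> inv \<sigma>B \<in> G"
    using \<sigma> monodromy_perm_group perm_group_comp perm_group_inv unfolding EY_def by metis
  ultimately show ?thesis by simp
qed

lemma alt_group_triangle: "alt_group {c, Inr P, Inr 0} \<subseteq> G"
proof (rule alt_group_subset_if_three_cycles)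
  show "perm_group G" using monodromy_perm_group unfolding EY_def .
  show "c \<noteq> Inr P" unfolding c_def using P_ge_5 by simp
  fix x assume "x \<in> {c, Inr P, Inr 0}" "x \<noteq> c" "x \<noteq> Inr P"
  then show "cycle_of_list [c, Inr P, x] \<in> G" using three_cycle_in_monodromy by auto
qed auto

(* Every vertex of Y is reachable from c: first the two blocks, then Z through the new edge. *)
abbreviation reachable :: "'a + nat \<Rightarrow> bool" where
  "reachable w \<equiv> (c, w) \<in> (adj EY)\<^sup>*"

lemma reachable_step:
  assumes "w \<in> VY" "i < r"
  shows "reachable w \<Longrightarrow> reachable (\<pi> i w)" and "reachable (\<pi> i w) \<Longrightarrow> reachable w"
  using adj_edges_ofI[OF assms] unfolding EY_def by (auto intro: rtrancl_into_rtrancl)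

lemma reachable_B: "k < P \<Longrightarrow> reachable (Inr k)"
proof (induction k)
  case 0
  have "c \<in> VY" unfolding c_def VY_def using P_ge_5 by auto
  moreover have "\<pi> j1 c = Inr 0" unfolding c_def using \<pi>_j1_B[of "P - 1"] P_ge_5 by simp
  ultimately show ?case using reachable_step(1)[OF _ labels(2)] by fastforce
next
  case (Suc k)
  have "Inr k \<in> VY" unfolding VY_def using Suc.prems by auto
  moreover have "\<pi> j1 (Inr k) = Inr (Suc k)" using \<pi>_j1_B[of k] Suc.prems by simp
  ultimately show ?case using Suc reachable_step(1)[OF _ labels(2)] by fastforce
qed

lemma reachable_A: "j < P \<Longrightarrow> reachable (Inr (P - 1 + j))"
proof (induction j)
  case 0 then show ?case by (simp add: c_def)
next
  case (Suc j)
  have "Inr (P - 1 + j) \<in> VY" unfolding VY_def using Suc.prems by auto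
  moreover have "\<pi> i0 (Inr (P - 1 + j)) = Inr (P - 1 + Suc j)" using \<pi>_i0_A[of j] Suc.prems by simp
  ultimately show ?case using Suc reachable_step(1)[OF _ labels(1)] by fastforce
qed

lemma reachable_Z: "z \<in> VZ \<Longrightarrow> reachable (Inl z)"
proof -
  have z0VY: "Inl z0 \<in> VY" "Inr 1 \<in> VY" unfolding VY_def using z0 P_ge_5 by auto
  have r1: "reachable (Inr 1)" using reachable_B P_ge_5 by simp
  have \<pi>\<rho>: "\<pi> i0 (Inl z0) = \<rho> i0 (Inl z0)" "\<pi> i0 (Inr 1) = \<rho> i0 (Inr 1)"
    using \<pi>_on_core[OF labels(1)] z0 by (auto simp: core_def)
  from \<rho>_attach have reach_z0: "reachable (Inl z0)"
  proof
    assume "\<rho> i0 (Inl z0) = Inr 1"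
    then show ?thesis using reachable_step(2)[OF z0VY(1) labels(1)] r1 \<pi>\<rho>(1) by simp
  next
    assume "\<rho> i0 (Inr 1) = Inl z0"
    then show ?thesis using reachable_step(1)[OF z0VY(2) labels(1) r1] \<pi>\<rho>(2) by simp
  qed
  assume "z \<in> VZ"
  then have "(z0, z) \<in> (adj EZ)\<^sup>*" using connected_Z z0 unfolding connected_graph_def by blast
  then show ?thesis
  proof (induction rule: rtrancl_induct)
    case base then show ?case by (rule reach_z0)
  next
    case (step y y')
    then obtain i where "(y, i, y') \<in> EZ \<or> (y', i, y) \<in> EZ" unfolding adj_def by blast
    then show ?case
    proof
      assume e: "(y, i, y') \<in> EZ"
      then have "y \<in> VZ" "i < r" using labelled_Z unfolding labelled_graph_def by auto
      then show ?thesis using e step reachable_step(1)[of "Inl y" i] \<rho>_edges \<pi>_Inl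
        unfolding VY_def by auto
    next
      assume e: "(y', i, y) \<in> EZ"
      then have "y' \<in> VZ" "i < r" using labelled_Z unfolding labelled_graph_def by auto
      then show ?thesis using e step reachable_step(2)[of "Inl y'" i] \<rho>_edges \<pi>_Inl
        unfolding VY_def by auto
    qed
  qed
qed

lemma reachable_VY: "w \<in> VY \<Longrightarrow> reachable w"
proof -
  assume "w \<in> VY"
  then consider z where "z \<in> VZ" "w = Inl z" | k where "k < 2 * P - 1" "w = Inr k"
    unfolding VY_def by auto
  then show ?thesis
  proof cases
    case (2 k)
    show ?thesis
    proof (cases "k < P")
      case False
      then have "k = P - 1 + (k - (P - 1))" "k - (P - 1) < P" using 2 by auto
      then show ?thesis using reachable_A[of "k - (P - 1)"] 2 by simp
    qed (use reachable_B 2 in simp)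
  qed (use reachable_Z in simp)
qed

lemma connected_Y: "connected_graph VY EY"
  by (rule connected_graph_from_root) (rule reachable_VY)

(* Alt(VY) lies in the monodromy group, by the spreading criterion with
   R0 = {c, Inr P, Inr 0}: each generator maps two points of R0 into R0, and the only
   invariant set containing c is all of VY. *)
lemma alt_group_subset_monodromy: "alt_group VY \<subseteq> G"
proof (rule alt_group_subset_by_spreading[where S = "\<pi> ` {..<r}"])
  show "perm_group G" using monodromy_perm_group unfolding EY_def .
  show "g permutes VY" if "g \<in> G" for g using monodromy_permutes that unfolding EY_def .
  show "{c, Inr P, Inr 0} \<subseteq> VY" unfolding c_def VY_def using P_ge_5 by auto
  show "\<pi> ` {..<r} \<subseteq> G" using monodromy_generator unfolding EY_def by auto
  show "\<exists>u\<in>{c, Inr P, Inr 0}. \<exists>v\<in>{c, Inr P, Inr 0}. u \<noteq> v \<and> s u \<in> {c, Inr P, Inr 0}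
      \<and> s v \<in> {c, Inr P, Inr 0}" if s: "s \<in> \<pi> ` {..<r}" for s
  proof -
    obtain i where i: "i < r" "s = \<pi> i" using s by blast
    have c_ne: "c \<noteq> Inr P" "c \<noteq> Inr 0" unfolding c_def using P_ge_5 by auto
    have "\<pi> i0 c = Inr P" using \<pi>_i0_A[of 0] P_ge_5 by (simp add: c_def)
    moreover have "\<pi> j1 c = Inr 0" using \<pi>_j1_B[of "P - 1"] P_ge_5 by (simp add: c_def)
    moreover have "\<pi> i c = c" "\<pi> i (Inr P) = Inr P" if "i \<noteq> i0" "i \<noteq> j1"
      using \<pi>_fixed(3)[OF i(1) that] P_ge_5 by (auto simp: c_def)
    ultimately show ?thesis using i c_ne \<pi>_fixed(1,2) by (cases "i = i0"; cases "i = j1") auto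
  qed
  show "R = VY" if "{c, Inr P, Inr 0} \<subseteq> R" "R \<subseteq> VY"
    and closed: "\<And>s x. s \<in> \<pi> ` {..<r} \<Longrightarrow> x \<in> R \<Longrightarrow> s x \<in> R \<and> inv s x \<in> R" for R
  proof -
    have "w \<in> R" if "w \<in> VY" for w
      using reachable_in_invariant_set[OF reachable_VY[OF that, unfolded EY_def]] closed
        \<open>{c, Inr P, Inr 0} \<subseteq> R\<close> by auto
    then show ?thesis using \<open>R \<subseteq> VY\<close> by blast
  qed
qed (use finite_VY alt_group_triangle in auto)

(* All generators are even, so the monodromy group is exactly Alt(VY). *)
lemma monodromy_eq_alt_group: "G = alt_group VY"
proof
  show "G \<subseteq> alt_group VY"
    using monodromy_permutes monodromy_even[OF finite_VY \<pi>_even] unfolding alt_group_def EY_def by blast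
qed (rule alt_group_subset_monodromy)

lemma extends_Z: "Inl ` VZ \<subseteq> VY" "(\<lambda>(u, i, v). (Inl u, i, Inl v)) ` EZ \<subseteq> EY"
proof -
  show "Inl ` VZ \<subseteq> VY" unfolding VY_def by auto
  have "(Inl u, i, Inl v) \<in> EY" if e: "(u, i, v) \<in> EZ" for u i v
  proof -
    have "u \<in> VZ" "i < r" using e labelled_Z unfolding labelled_graph_def by auto
    moreover have "Inl u \<in> VY" using \<open>u \<in> VZ\<close> unfolding VY_def by blast
    ultimately show ?thesis using \<rho>_edges[OF e] \<pi>_Inl by (simp add: EY_def edges_of_iff)
  qed
  then show "(\<lambda>(u, i, v). (Inl u, i, Inl v)) ` EZ \<subseteq> EY" by auto
qed

lemma finite_EY: "finite EY"
proof -
  have "EY \<subseteq> (\<lambda>(u, i). (u, i, \<pi> i u)) ` (VY \<times> {..<r})" by (auto simp: EY_def edges_of_def)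
  then show ?thesis by (rule finite_subset) (simp add: finite_VY)
qed

end

theorem lemma3p3:
  fixes r :: nat and VZ :: "'a set" and EZ :: "('a \<times> nat \<times> 'a) set"
  assumes "r \<ge> 2"
    and "finite VZ" and "finite EZ" and "VZ \<noteq> {}"
    and "connected_graph VZ EZ"
    and "immersion r VZ EZ"
    and "\<not> covering r VZ EZ"
  shows "\<exists>(VY :: ('a + nat) set) (EY :: (('a + nat) \<times> nat \<times> ('a + nat)) set).
           finite VY \<and> finite EY \<and> connected_graph VY EY \<and> covering r VY EY \<and>
           Inl ` VZ \<subseteq> VY \<and> (\<lambda>(u, i, v). (Inl u, i, Inl v)) ` EZ \<subseteq> EY \<and>
           monodromy_group r VY EY = alt_group VY"
proof -
  obtain i0 z0 where i0: "i0 < r" and z0: "z0 \<in> VZ"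
    and free: "(\<forall>v. (z0, i0, v) \<notin> EZ) \<or> (\<forall>v. (v, i0, z0) \<notin> EZ)"
    using non_covering_free_half_edge[OF assms(6,7)] by blast
  define j1 where "j1 = (if i0 = 0 then 1 else (0 :: nat))"
  have j1: "j1 < r" "i0 \<noteq> j1" using assms(1) unfolding j1_def by auto
  obtain \<rho> where \<rho>: "\<And>i. i < r \<Longrightarrow> \<rho> i permutes core VZ i0 i"
    "\<And>u i v. (u, i, v) \<in> EZ \<Longrightarrow> \<rho> i (Inl u) = Inl v"
    "\<rho> i0 (Inl z0) = Inr 1 \<or> \<rho> i0 (Inr 1) = Inl z0"
    using immersion_completion[OF assms(6,2) i0 z0 free] by blast
  have "finite (core VZ i0 i)" for i using assms(2) by (simp add: core_def)
  then obtain M where M: "\<rho> i0 ^^ M = id" "\<rho> j1 ^^ M = id" "even M" "M \<ge> 4"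
    using common_even_period[OF \<rho>(1)[OF i0] \<rho>(1)[OF j1(1)]] by blast
  interpret Y: alternating_completion r VZ EZ i0 j1 z0 \<rho> M
    using i0 j1 assms(2,5,6) z0 \<rho> M unfolding immersion_def by unfold_locales auto
  show ?thesis
    using Y.finite_VY Y.finite_EY Y.connected_Y Y.covering_edges_of Y.extends_Z
      Y.monodromy_eq_alt_group
    unfolding Y.EY_def by blast
qed

end
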